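(* Assume $f$ satisfies conditions (A0)–(A3) below, with $R$ the constant from (A1). Then every $2\pi$-periodic solution $x$ of $\ddot x(t)=f(t,x(t),\mathbf x_t,\dot x(t))$ satisfies $|x(t)|\le R$ for all $t\in\mathbb R$.
   Context: Let $n,m\ge 1$ be integers, $\mathbf V=\mathbb R^n$ with Euclidean inner product $x\bullet z$ and norm $|x|$. For $\mathbf y=(y^1,\dots,y^m)\in\mathbf V^m$ put $|\mathbf y|:=\max_{j}|y^j|$. Fix reals $0=\tau_0<\tau_1<\dots<\tau_m<2\pi$ with $\tau_{m-j+1}=2\pi-\tau_j$ for $j=1,\dots,m$. Let $f:\mathbb R\times\mathbf V\times\mathbf V^m\times\mathbf V\to\mathbf V$, and for $x:\mathbb R\to\mathbf V$ put $\mathbf x_t:=(x(t-\tau_1),\dots,x(t-\tau_m))$. A $2\pi$-periodic solution is a $C^2$ function $x:\mathbb R\to\mathbf V$ with $x(t+2\pi)=x(t)$ and $\ddot x(t)=f(t,x(t),\mathbf x_t,\dot x(t))$ for all $t$. Conditions: (A0) $f$ is continuous and $2\pi$-periodic in $t$. (A1) There is $R>0$ such that for all $t$, $x,z\in\mathbf V$, $\mathbf y\in\mathbf V^m$: if $|x|\ge R$, $|\mathbf y|\le|x|$ and $x\bullet z=0$, then $x\bullet f(t,x,\mathbf y,z)>0$. (A2) There is a continuous $\phi:[0,\infty)\to(0,\infty)$ with $\int_0^\infty \frac{s\,ds}{\phi(s)}=\infty$ and $|f(t,x,\mathbf y,z)|\le\phi(|z|)$ whenever $|x|\le R$, $|\mathbf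 y|\le R$. (A3) There are $\alpha>0,K>0$ with $|f(t,x,\mathbf y,z)|\le\alpha(x\bullet f(t,x,\mathbf y,z)+|z|^2)+K$ whenever $|x|\le R$, $|\mathbf y|\le R$. *)

theory Defs
  imports "HOL-Analysis.Analysis"
begin

text \<open>Elements of V^m are represented as functions nat => V, of which only the
 coordinates 1..m are meaningful. The max-norm |y| = max_j |y^j|.\<close>
definition maxnorm :: "nat \<Rightarrow> (nat \<Rightarrow> 'a::real_normed_vector) \<Rightarrow> real" where
  "maxnorm m y = Max ((\<lambda>j. norm (y j)) ` {1..m})"

definition delayed :: "(nat \<Rightarrow> real) \<Rightarrow> (real \<Rightarrow> 'a) \<Rightarrow> real \<Rightarrow> nat \<Rightarrow> 'a" where
  "delayed tau x t = (\<lambda>j. x (t - tau j))"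

definition periodic_solution ::
  "(real \<Rightarrow> 'a::euclidean_space \<Rightarrow> (nat \<Rightarrow> 'a) \<Rightarrow> 'a \<Rightarrow> 'a) \<Rightarrow> (nat \<Rightarrow> real) \<Rightarrow> (real \<Rightarrow> 'a) \<Rightarrow> bool"
  where
  "periodic_solution f tau x \<longleftrightarrow>
     (\<exists>x' x''. continuous_on UNIV x'' \<and>
        (\<forall>t. (x has_vector_derivative x' t) (at t) \<and>
             (x' has_vector_derivative x'' t) (at t) \<and>
             x (t + 2 * pi) = x t \<and>
             x'' t = f t (x t) (delayed tau x t) (x' t)))"

end

theory Submission
  imports Defs "HOL-Library.Periodic_Fun"
begin

text \<open>Maximum principle: a periodic solution attains the maximum of its norm at some t0.
  There the first two derivatives of |x|^2 give x(t0) \<bullet> x'(t0) = 0 and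
  |x'(t0)|^2 + x(t0) \<bullet> x''(t0) \<le> 0. Every delayed value is then bounded by |x(t0)|,
  so if |x(t0)| > R then (A1) forces x(t0) \<bullet> x''(t0) > 0, a contradiction.
  Only (A1) and periodicity are used; (A2), (A3) and the conditions on the delays are not.\<close>

lemma has_real_derivative_inner:
  fixes u v :: "real \<Rightarrow> 'a::real_inner"
  assumes "(u has_vector_derivative u') (at t)" and "(v has_vector_derivative v') (at t)"
  shows "((\<lambda>t. u t \<bullet> v t) has_real_derivative (u' \<bullet> v t + u t \<bullet> v')) (at t)"
  using bounded_bilinear.has_vector_derivative[OF bounded_bilinear_inner assms]
  by (simp add: has_real_derivative_iff_has_vector_derivative add.commute)

lemma DERIV_local_max_second:
  fixes r :: "real \<Rightarrow> real"
  assumes "d > 0"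
    and r': "\<And>t. dist t t0 < d \<Longrightarrow> (r has_real_derivative r' t) (at t)"
    and r'': "(r' has_real_derivative r'') (at t0)"
    and max: "\<And>t. dist t t0 < d \<Longrightarrow> r t \<le> r t0"
  shows "r'' \<le> 0"
proof (rule ccontr)
  assume "\<not> r'' \<le> 0"
  then obtain e where "e > 0" and inc: "\<And>h. 0 < h \<Longrightarrow> h < e \<Longrightarrow> r' t0 < r' (t0 + h)"
    using DERIV_pos_inc_right[OF r''] by auto
  have "(r has_real_derivative r' t0) (at t0)"
    using r' \<open>d > 0\<close> by simp
  then have "r' t0 = 0"
    by (rule DERIV_local_max[OF _ \<open>d > 0\<close>])
      (use max in \<open>auto simp: dist_real_def abs_minus_commute\<close>)
  define h where "h = min d e / 2"
  have h: "0 < h" "h < d" "h < e"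
    using \<open>d > 0\<close> \<open>e > 0\<close> by (auto simp: h_def)
  obtain z where z: "t0 < z" "z < t0 + h" and mvt: "r (t0 + h) - r t0 = h * r' z"
    using MVT2[of t0 "t0 + h" r r'] h r' by (fastforce simp: dist_real_def)
  have "r' z > 0"
    using inc[of "z - t0"] z h \<open>r' t0 = 0\<close> by simp
  then have "h * r' z > 0"
    using h by simp
  then have "r (t0 + h) > r t0"
    using mvt by linarith
  with max[of "t0 + h"] h show False
    by (simp add: dist_real_def)
qed

lemma norm_max_inner_derivatives:
  fixes x :: "real \<Rightarrow> 'a::real_inner"
  assumes x': "\<And>t. (x has_vector_derivative x' t) (at t)"
    and x'': "(x' has_vector_derivative x'') (at t0)"
    and max: "\<And>t. norm (x t) \<le> norm (x t0)"
  shows "x t0 \<bullet> x' t0 = 0" and "x' t0 \<bullet> x' t0 + x t0 \<bullet> x'' \<le> 0"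
proof -
  have sq_max: "x t \<bullet> x t \<le> x t0 \<bullet> x t0" for t
    using power_mono[OF max[of t] norm_ge_zero, of 2] by (simp add: power2_norm_eq_inner)
  have r': "((\<lambda>t. x t \<bullet> x t) has_real_derivative 2 * (x t \<bullet> x' t)) (at t)" for t
    using has_real_derivative_inner[OF x' x'] by (simp add: inner_commute)
  have "2 * (x t0 \<bullet> x' t0) = 0"
    using DERIV_local_max[OF r' zero_less_one] sq_max by blast
  then show "x t0 \<bullet> x' t0 = 0" by simp
  have "((\<lambda>t. 2 * (x t \<bullet> x' t)) has_real_derivative 2 * (x' t0 \<bullet> x' t0 + x t0 \<bullet> x'')) (at t0)"
    using has_real_derivative_inner[OF x' x''] by (intro DERIV_cmult)
  then have "2 * (x' t0 \<bullet> x' t0 + x t0 \<bullet> x'') \<le> 0"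
    using DERIV_local_max_second[OF zero_less_one r'] sq_max by blast
  then show "x' t0 \<bullet> x' t0 + x t0 \<bullet> x'' \<le> 0" by simp
qed

lemma continuous_periodic_attains_sup:
  fixes g :: "real \<Rightarrow> real"
  assumes "continuous_on UNIV g" and "p > 0" and per: "\<And>t. g (t + p) = g t"
  obtains t0 where "\<And>t. g t \<le> g t0"
proof -
  interpret periodic_fun_simple g p
    by unfold_locales (rule per)
  have "continuous_on {0..p} g"
    using \<open>continuous_on UNIV g\<close> by (rule continuous_on_subset) simp
  then obtain t0 where t0: "\<And>s. s \<in> {0..p} \<Longrightarrow> g s \<le> g t0"
    using continuous_attains_sup[OF compact_Icc, of 0 p g] \<open>p > 0\<close> by fastforce
  have "g t \<le> g t0" for t
  proof -
    define k where "k = \<lfloor>t / p\<rfloor>"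
    have "of_int k \<le> t / p" "t / p < of_int k + 1"
      unfolding k_def by linarith+
    then have "of_int k * p \<le> t" "t < of_int k * p + p"
      using \<open>p > 0\<close> by (simp_all add: field_simps)
    then have "t - of_int k * p \<in> {0..p}" by simp
    moreover have "g t = g (t - of_int k * p + of_int k * p)" by simp
    ultimately show ?thesis
      using t0 plus_of_int[of "t - of_int k * p" k] by simp
  qed
  then show ?thesis by (rule that)
qed

theorem lemma3p2:
  fixes f :: "real \<Rightarrow> 'a::euclidean_space \<Rightarrow> (nat \<Rightarrow> 'a) \<Rightarrow> 'a \<Rightarrow> 'a"
    and tau :: "nat \<Rightarrow> real" and m :: nat and R :: real
    and x :: "real \<Rightarrow> 'a"
  assumes m: "m \<ge> 1"
    and tau0: "tau 0 = 0"
    and tau_mono: "\<And>j. j < m \<Longrightarrow> tau j < tau (Suc j)"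
    and tau_lt: "tau m < 2 * pi"
    and tau_sym: "\<And>j. j \<in> {1..m} \<Longrightarrow> tau (m - j + 1) = 2 * pi - tau j"
    and f_dep: "\<And>t u y y' z. (\<forall>j\<in>{1..m}. y j = y' j) \<Longrightarrow> f t u y z = f t u y' z"
    and A0_cont: "continuous_on UNIV (\<lambda>(t, u, y, z). f t u y z)"
    and A0_per: "\<And>t u y z. f (t + 2 * pi) u y z = f t u y z"
    and R: "R > 0"
    and A1: "\<And>t u y z. norm u \<ge> R \<Longrightarrow> maxnorm m y \<le> norm u \<Longrightarrow> u \<bullet> z = 0
               \<Longrightarrow> u \<bullet> f t u y z > 0"
    and A2: "\<exists>\<phi>::real \<Rightarrow> real. continuous_on {0..} \<phi> \<and> (\<forall>s\<ge>0. \<phi> s > 0) \<and>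
               filterlim (\<lambda>b. integral {0..b} (\<lambda>s. s / \<phi> s)) at_top at_top \<and>
               (\<forall>t u y z. norm u \<le> R \<longrightarrow> maxnorm m y \<le> R \<longrightarrow> norm (f t u y z) \<le> \<phi> (norm z))"
    and A3: "\<exists>\<alpha> K. \<alpha> > 0 \<and> K > 0 \<and>
               (\<forall>t u y z. norm u \<le> R \<longrightarrow> maxnorm m y \<le> R \<longrightarrow>
                  norm (f t u y z) \<le> \<alpha> * (u \<bullet> f t u y z + (norm z)\<^sup>2) + K)"
    and sol: "periodic_solution f tau x"
  shows "\<forall>t. norm (x t) \<le> R"
proof -
  obtain x' x'' where x': "\<And>t. (x has_vector_derivative x' t) (at t)"
    and x'': "\<And>t. (x' has_vector_derivative x'' t) (at t)"
    and per: "\<And>t. x (t + 2 * pi) = x t"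
    and eqn: "\<And>t. x'' t = f t (x t) (delayed tau x t) (x' t)"
    using sol unfolding periodic_solution_def by blast
  have "continuous_on UNIV (\<lambda>t. norm (x t))"
    using x' by (intro continuous_on_norm continuous_at_imp_continuous_on)
      (meson has_vector_derivative_continuous)
  then obtain t0 where max: "\<And>t. norm (x t) \<le> norm (x t0)"
    using continuous_periodic_attains_sup[of "\<lambda>t. norm (x t)" "2 * pi"] per by auto
  have "norm (x t0) \<le> R"
  proof (rule ccontr)
    assume "\<not> norm (x t0) \<le> R"
    moreover have "maxnorm m (delayed tau x t0) \<le> norm (x t0)"
      using m max by (simp add: maxnorm_def delayed_def)
    moreover have "x t0 \<bullet> x' t0 = 0" and "x' t0 \<bullet> x' t0 + x t0 \<bullet> x'' t0 \<le> 0"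
      using norm_max_inner_derivatives[OF x' x'' max] by auto
    ultimately show False
      using A1[of "x t0" "delayed tau x t0" "x' t0" t0] eqn[of t0]
      by (smt (verit) inner_ge_zero)
  qed
  with max show ?thesis
    using order_trans by blast
qed

end
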